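(* Let $X$ be a partial design graph with parameters $(m,d,c_1,c_2)$, and let $Y$ be its $c_1$-graph. Then: (i) $Y$ is regular of degree $$d'=\frac{d(d-1)-(m-1)c_2}{c_1-c_2};$$ (ii) if $\alpha_1'=d',\alpha_2',\dots,\alpha_m'$ are the adjacency eigenvalues of $Y$ (with multiplicity), then the adjacency eigenvalues of $X$, with multiplicity, are $$\pm d,\qquad \pm\sqrt{(d-c_2)+(c_1-c_2)\alpha_k'}\quad (k=2,\dots,m).$$
   Context: A partial design graph is a finite, simple, connected, regular bipartite graph with $m$ vertices of each colour and degree $d$ such that the number of common neighbours of two distinct vertices of the same colour takes exactly two values $c_1\neq c_2$. Its $c_1$-graph is the (possibly disconnected) graph whose vertices are the $m$ vertices of one fixed colour (the black vertices), two of them being adjacent if and only if they have exactly $c_1$ common neighbours in $X$. Adjacency eigenvalues are eigenvalues of the adjacency matrix. *)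

theory Defs
  imports "Jordan_Normal_Form.Char_Poly"
begin

text \<open>Black vertices are 0..<m, white vertices are 0..<m as well; the incidence
 relation N b w says that black b is adjacent to white w.
 As a single graph, X has vertex set {0..<2m}: vertex i<m is black i,
 vertex m+j is white j.\<close>

definition X_adj :: "nat \<Rightarrow> (nat \<Rightarrow> nat \<Rightarrow> bool) \<Rightarrow> nat \<Rightarrow> nat \<Rightarrow> bool" where
  "X_adj m N i j \<longleftrightarrow> i < 2*m \<and> j < 2*m \<and>
     ((i < m \<and> m \<le> j \<and> N i (j - m)) \<or> (j < m \<and> m \<le> i \<and> N j (i - m)))"

definition X_connected :: "nat \<Rightarrow> (nat \<Rightarrow> nat \<Rightarrow> bool) \<Rightarrow> bool" where
  "X_connected m N \<longleftrightarrow> (\<forall>i<2*m. \<forall>j<2*m. (X_adj m N)\<^sup>*\<^sup>* i j)"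

definition black_deg :: "nat \<Rightarrow> (nat \<Rightarrow> nat \<Rightarrow> bool) \<Rightarrow> nat \<Rightarrow> nat" where
  "black_deg m N b = card {w. w < m \<and> N b w}"

definition white_deg :: "nat \<Rightarrow> (nat \<Rightarrow> nat \<Rightarrow> bool) \<Rightarrow> nat \<Rightarrow> nat" where
  "white_deg m N w = card {b. b < m \<and> N b w}"

definition common_black :: "nat \<Rightarrow> (nat \<Rightarrow> nat \<Rightarrow> bool) \<Rightarrow> nat \<Rightarrow> nat \<Rightarrow> nat" where
  "common_black m N u v = card {w. w < m \<and> N u w \<and> N v w}"

definition common_white :: "nat \<Rightarrow> (nat \<Rightarrow> nat \<Rightarrow> bool) \<Rightarrow> nat \<Rightarrow> nat \<Rightarrow> nat" where
  "common_white m N u v = card {b. b < m \<and> N b u \<and> N b v}"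

definition partial_design_graph ::
  "nat \<Rightarrow> nat \<Rightarrow> nat \<Rightarrow> nat \<Rightarrow> (nat \<Rightarrow> nat \<Rightarrow> bool) \<Rightarrow> bool" where
  "partial_design_graph m d c1 c2 N \<longleftrightarrow>
     X_connected m N \<and>
     (\<forall>b<m. black_deg m N b = d) \<and> (\<forall>w<m. white_deg m N w = d) \<and>
     c1 \<noteq> c2 \<and>
     {common_black m N u v | u v. u < m \<and> v < m \<and> u \<noteq> v}
       \<union> {common_white m N u v | u v. u < m \<and> v < m \<and> u \<noteq> v} = {c1, c2}"

definition X_mat :: "nat \<Rightarrow> (nat \<Rightarrow> nat \<Rightarrow> bool) \<Rightarrow> real mat" where
  "X_mat m N = mat (2*m) (2*m) (\<lambda>(i,j). if X_adj m N i j then 1 else 0)"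

definition Y_adj :: "nat \<Rightarrow> nat \<Rightarrow> (nat \<Rightarrow> nat \<Rightarrow> bool) \<Rightarrow> nat \<Rightarrow> nat \<Rightarrow> bool" where
  "Y_adj m c1 N u v \<longleftrightarrow> u < m \<and> v < m \<and> u \<noteq> v \<and> common_black m N u v = c1"

definition Y_mat :: "nat \<Rightarrow> nat \<Rightarrow> (nat \<Rightarrow> nat \<Rightarrow> bool) \<Rightarrow> real mat" where
  "Y_mat m c1 N = mat m m (\<lambda>(u,v). if Y_adj m c1 N u v then 1 else 0)"

definition Y_deg :: "nat \<Rightarrow> nat \<Rightarrow> (nat \<Rightarrow> nat \<Rightarrow> bool) \<Rightarrow> nat \<Rightarrow> nat" where
  "Y_deg m c1 N u = card {v. Y_adj m c1 N u v}"

end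

theory Submission
  imports Defs
begin

text \<open>Let \<open>M\<close> be the biadjacency matrix of \<open>X\<close> and \<open>A\<close> the adjacency matrix of its
  \<open>c\<^sub>1\<close>-graph. Counting common neighbours gives
  \<open>M M\<^sup>T = (d - c\<^sub>2) I + (c\<^sub>1 - c\<^sub>2) A + c\<^sub>2 J\<close>, and \<open>M M\<^sup>T\<close> has constant row sums \<open>d\<^sup>2\<close>;
  comparing row sums shows that \<open>A\<close> is regular of degree \<open>d'\<close>. Since the all-ones vector is then
  an eigenvector of \<open>A\<close>, adding \<open>c\<^sub>2 J\<close> only moves the eigenvalue belonging to it, from
  \<open>(d - c\<^sub>2) + (c\<^sub>1 - c\<^sub>2) d'\<close> to \<open>d\<^sup>2\<close>, so \<open>M M\<^sup>T\<close> has eigenvalues \<open>d\<^sup>2\<close> and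
  \<open>\<mu>\<^sub>k = (d - c\<^sub>2) + (c\<^sub>1 - c\<^sub>2) \<alpha>'\<^sub>k\<close>. Finally \<open>det (x I - X) = det (x\<^sup>2 I - M M\<^sup>T)\<close> by the block
  determinant formula, and the \<open>\<mu>\<^sub>k\<close> are eigenvalues of a Gram matrix, hence nonnegative, so
  each factor \<open>x\<^sup>2 - \<mu>\<^sub>k\<close> splits as \<open>(x - \<surd>\<mu>\<^sub>k)(x + \<surd>\<mu>\<^sub>k)\<close>.\<close>

abbreviation ones_vec :: "nat \<Rightarrow> 'a :: one vec" where
  "ones_vec n \<equiv> vec n (\<lambda>_. 1)"

abbreviation ones_mat :: "nat \<Rightarrow> 'a :: one mat" where
  "ones_mat n \<equiv> mat n n (\<lambda>_. 1)"

lemma poly_char_poly: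
  assumes "(A :: 'a :: field mat) \<in> carrier_mat n n"
  shows "poly (char_poly A) x = det (x \<cdot>\<^sub>m 1\<^sub>m n - A)"
proof -
  have "- char_matrix A x = x \<cdot>\<^sub>m 1\<^sub>m n - A"
    unfolding char_matrix_def using assms by (intro eq_matI) auto
  then show ?thesis using char_poly_matrix[OF assms] by simp
qed

lemma det_one_add_mult_commute:
  fixes U V :: "'a :: idom mat"
  assumes U: "U \<in> carrier_mat n n" and V: "V \<in> carrier_mat n n"
  shows "det (1\<^sub>m n + U * V) = det (1\<^sub>m n + V * U)"
proof -
  let ?F = "four_block_mat (1\<^sub>m n) U (-V) (1\<^sub>m n)"
  let ?R = "four_block_mat (1\<^sub>m n) (-U) (0\<^sub>m n n) (1\<^sub>m n)"
  have F: "?F \<in> carrier_mat (n+n) (n+n)" and R: "?R \<in> carrier_mat (n+n) (n+n)"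
    using U V by auto
  have "det ?F = det (1\<^sub>m n * 1\<^sub>m n - U * (-V))"
    by (rule det_four_block_mat) (use U V in auto)
  also have "1\<^sub>m n * 1\<^sub>m n - U * (-V) = 1\<^sub>m n + U * V"
    using U V by (intro eq_matI) auto
  finally have detF: "det ?F = det (1\<^sub>m n + U * V)" .
  have "?F * ?R = four_block_mat (1\<^sub>m n * 1\<^sub>m n + U * 0\<^sub>m n n) (1\<^sub>m n * (-U) + U * 1\<^sub>m n)
      ((-V) * 1\<^sub>m n + 1\<^sub>m n * 0\<^sub>m n n) ((-V) * (-U) + 1\<^sub>m n * 1\<^sub>m n)"
    by (rule mult_four_block_mat) (use U V in auto)
  also have "\<dots> = four_block_mat (1\<^sub>m n) (0\<^sub>m n n) (-V) (1\<^sub>m n + V * U)"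
    using U V by (intro cong_four_block_mat) (auto intro!: eq_matI)
  finally have FR: "?F * ?R = four_block_mat (1\<^sub>m n) (0\<^sub>m n n) (-V) (1\<^sub>m n + V * U)" .
  have "det ?R = 1"
    by (subst det_four_block_mat_lower_left_zero[of _ n _ n]) (use U in auto)
  moreover have "det (?F * ?R) = det (1\<^sub>m n + V * U)"
    unfolding FR by (subst det_four_block_mat_upper_right_zero[of _ n _ n]) (use U V in auto)
  ultimately show ?thesis using detF det_mult[OF F R] by simp
qed

lemma det_one_add_smult_ones_mat:
  "det (1\<^sub>m n + t \<cdot>\<^sub>m ones_mat n) = 1 + t * of_nat n" for t :: "'a :: idom"
proof (cases "n = 0")
  case True
  then show ?thesis by (simp add: det_def)
next
  case False
  define U :: "'a mat" where "U = mat n n (\<lambda>(i,j). if j = 0 then t else 0)"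
  define V :: "'a mat" where "V = mat n n (\<lambda>(i,j). if i = 0 then 1 else 0)"
  \<comment> \<open>\<open>U * V\<close> is the rank-one matrix \<open>t J\<close>, whereas \<open>1 + V * U\<close> is diagonal.\<close>
  have "U * V = t \<cdot>\<^sub>m ones_mat n"
  proof (rule eq_matI)
    fix i j assume "i < dim_row (t \<cdot>\<^sub>m ones_mat n :: 'a mat)" "j < dim_col (t \<cdot>\<^sub>m ones_mat n :: 'a mat)"
    then have ij: "i < n" "j < n" by auto
    have "(U * V) $$ (i,j) = (\<Sum>k\<in>{0..<n}. (if k = 0 then t else 0) * (if k = 0 then 1 else 0))"
      using ij by (simp add: U_def V_def scalar_prod_def)
    also have "\<dots> = (\<Sum>k\<in>{0..<n}. if k = 0 then t else 0)"
      by (rule sum.cong) auto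
    finally show "(U * V) $$ (i,j) = (t \<cdot>\<^sub>m ones_mat n) $$ (i,j)" using ij False by simp
  qed (auto simp: U_def V_def)
  moreover have diag: "1\<^sub>m n + V * U = mat n n (\<lambda>(i,j). if i = j then (if i = 0 then 1 + t * of_nat n else 1) else 0)"
    unfolding U_def V_def by (rule eq_matI) (auto simp: scalar_prod_def)
  moreover have "det (1\<^sub>m n + V * U) = 1 + t * of_nat n"
  proof -
    have "det (1\<^sub>m n + V * U) = prod_list (diag_mat (1\<^sub>m n + V * U))"
      by (rule det_upper_triangular) (auto simp: diag upper_triangular_def)
    also have "\<dots> = (\<Prod>i\<in>{0..<n}. if i = 0 then 1 + t * of_nat n else 1)"
      unfolding diag_mat_def prod.distinct_set_conv_list[OF distinct_upt, symmetric] set_upt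
      by (intro prod.cong) (auto simp: diag)
    finally show ?thesis using False by (simp add: prod.delta)
  qed
  ultimately show ?thesis
    using det_one_add_mult_commute[of U n V] by (simp add: U_def V_def)
qed

lemma mult_ones_mat_const_row_sums:
  fixes C :: "'a :: comm_ring_1 mat"
  assumes C: "C \<in> carrier_mat n n" and rows: "C *\<^sub>v ones_vec n = \<beta> \<cdot>\<^sub>v ones_vec n"
  shows "C * ones_mat n = \<beta> \<cdot>\<^sub>m ones_mat n"
proof (rule eq_matI)
  fix i j assume "i < dim_row (\<beta> \<cdot>\<^sub>m ones_mat n)" "j < dim_col (\<beta> \<cdot>\<^sub>m ones_mat n)"
  then have ij: "i < n" "j < n" by auto
  have "col (ones_mat n) j = ones_vec n" using ij by (intro eq_vecI) auto
  moreover have "row C i \<bullet> ones_vec n = \<beta>"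
    using arg_cong[OF rows, of "\<lambda>v. v $ i"] C ij by simp
  ultimately show "(C * ones_mat n) $$ (i, j) = (\<beta> \<cdot>\<^sub>m ones_mat n) $$ (i, j)"
    using C ij by simp
qed (use C in auto)

lemma det_add_smult_ones_mat:
  fixes C :: "'a :: field mat"
  assumes C: "C \<in> carrier_mat n n" and rows: "C *\<^sub>v ones_vec n = \<beta> \<cdot>\<^sub>v ones_vec n"
  shows "\<beta> * det (C + c \<cdot>\<^sub>m ones_mat n) = (\<beta> + c * of_nat n) * det C"
proof (cases "\<beta> = 0")
  case True
  \<comment> \<open>then the all-ones vector lies in the kernel of \<open>C\<close>\<close>
  have "of_nat n * det C = 0"
  proof (cases "n = 0")
    case False
    then have "ones_vec n \<noteq> (0\<^sub>v n :: 'a vec)"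
      by (metis index_vec index_zero_vec(1) one_neq_zero neq0_conv)
    moreover have "C *\<^sub>v ones_vec n = 0\<^sub>v n"
      using rows True by (intro eq_vecI) auto
    ultimately have "det C = 0"
      unfolding det_0_iff_vec_prod_zero[OF C] by (intro exI[of _ "ones_vec n"]) auto
    then show ?thesis by simp
  qed simp
  then show ?thesis using True by simp
next
  case False
  let ?E = "1\<^sub>m n + (c / \<beta>) \<cdot>\<^sub>m ones_mat n"
  have "C * ?E = C * 1\<^sub>m n + C * ((c / \<beta>) \<cdot>\<^sub>m ones_mat n)"
    by (rule mult_add_distrib_mat[OF C]) auto
  also have "\<dots> = C + (c / \<beta>) \<cdot>\<^sub>m (\<beta> \<cdot>\<^sub>m ones_mat n)"
    using C by (simp add: mult_smult_distrib[of _ n n _ n] mult_ones_mat_const_row_sums[OF C rows])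
  also have "\<dots> = C + c \<cdot>\<^sub>m ones_mat n"
    using C False by (intro eq_matI) auto
  finally have "C * ?E = C + c \<cdot>\<^sub>m ones_mat n" .
  then have "det (C + c \<cdot>\<^sub>m ones_mat n) = det C * (1 + c / \<beta> * of_nat n)"
    using det_mult[OF C, of ?E] det_one_add_smult_ones_mat[where t = "c / \<beta>"] by simp
  then show ?thesis using False by (simp add: field_simps)
qed

lemma char_poly_add_smult_ones_mat:
  fixes P :: "'a :: field_char_0 mat"
  assumes P: "P \<in> carrier_mat n n" and rows: "P *\<^sub>v ones_vec n = s \<cdot>\<^sub>v ones_vec n"
  shows "[:- s, 1:] * char_poly (P + c \<cdot>\<^sub>m ones_mat n) = [:- (s + c * of_nat n), 1:] * char_poly P"
proof (rule poly_ext)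
  fix y
  let ?C = "y \<cdot>\<^sub>m 1\<^sub>m n - P"
  have C: "?C \<in> carrier_mat n n" using P by (simp add: minus_carrier_mat)
  have "?C *\<^sub>v ones_vec n = y \<cdot>\<^sub>v ones_vec n - s \<cdot>\<^sub>v ones_vec n"
  proof -
    have "(y \<cdot>\<^sub>m 1\<^sub>m n) *\<^sub>v ones_vec n = y \<cdot>\<^sub>v ones_vec n"
      by (intro eq_vecI) (auto simp: scalar_prod_def sum_distrib_left[symmetric])
    then show ?thesis
      using P by (simp add: minus_mult_distrib_mat_vec[of _ n n] rows)
  qed
  also have "\<dots> = (y - s) \<cdot>\<^sub>v ones_vec n"
    by (intro eq_vecI) auto
  finally have "?C *\<^sub>v ones_vec n = (y - s) \<cdot>\<^sub>v ones_vec n" .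
  from det_add_smult_ones_mat[OF C this, of "- c"]
  have "(y - s) * det (?C + (- c) \<cdot>\<^sub>m ones_mat n) = (y - (s + c * of_nat n)) * det ?C"
    by (simp add: algebra_simps)
  moreover have "?C + (- c) \<cdot>\<^sub>m ones_mat n = y \<cdot>\<^sub>m 1\<^sub>m n - (P + c \<cdot>\<^sub>m ones_mat n)"
    using P by (intro eq_matI) auto
  ultimately show "poly ([:- s, 1:] * char_poly (P + c \<cdot>\<^sub>m ones_mat n)) y
    = poly ([:- (s + c * of_nat n), 1:] * char_poly P) y"
    using P by (simp add: poly_char_poly[of _ n] algebra_simps)
qed

lemma char_poly_affine:
  fixes A :: "'a :: field_char_0 mat"
  assumes A: "A \<in> carrier_mat n n" and b: "b \<noteq> 0"
    and cp: "char_poly A = (\<Prod>k<n. [:- \<alpha> k, 1:])"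
  shows "char_poly (a \<cdot>\<^sub>m 1\<^sub>m n + b \<cdot>\<^sub>m A) = (\<Prod>k<n. [:- (a + b * \<alpha> k), 1:])"
proof (rule poly_ext)
  fix y
  let ?z = "(y - a) / b"
  have "y \<cdot>\<^sub>m 1\<^sub>m n - (a \<cdot>\<^sub>m 1\<^sub>m n + b \<cdot>\<^sub>m A) = b \<cdot>\<^sub>m (?z \<cdot>\<^sub>m 1\<^sub>m n - A)"
    using A b by (intro eq_matI) (auto simp: field_simps)
  then have "poly (char_poly (a \<cdot>\<^sub>m 1\<^sub>m n + b \<cdot>\<^sub>m A)) y = b ^ n * poly (char_poly A) ?z"
    using A by (simp add: poly_char_poly[of _ n])
  also have "\<dots> = (\<Prod>k<n. b * (?z - \<alpha> k))"
    by (simp add: cp poly_prod prod.distrib)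
  also have "\<dots> = (\<Prod>k<n. y - (a + b * \<alpha> k))"
    using b by (intro prod.cong) (auto simp: field_simps)
  finally show "poly (char_poly (a \<cdot>\<^sub>m 1\<^sub>m n + b \<cdot>\<^sub>m A)) y = poly (\<Prod>k<n. [:- (a + b * \<alpha> k), 1:]) y"
    by (simp add: poly_prod algebra_simps)
qed

lemma char_poly_gram_root_nonneg:
  fixes A :: "real mat"
  assumes A: "A \<in> carrier_mat n k" and root: "poly (char_poly (A * transpose_mat A)) \<mu> = 0"
  shows "0 \<le> \<mu>"
proof -
  have AA: "A * transpose_mat A \<in> carrier_mat n n" using A by simp
  have "eigenvalue (A * transpose_mat A) \<mu>"
    using root eigenvalue_root_char_poly[OF AA] by simp
  then obtain v where v: "v \<in> carrier_vec n" "v \<noteq> 0\<^sub>v n"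
    and ev: "(A * transpose_mat A) *\<^sub>v v = \<mu> \<cdot>\<^sub>v v"
    unfolding eigenvalue_def eigenvector_def using A by auto
  define w where "w = transpose_mat A *\<^sub>v v"
  have w: "w \<in> carrier_vec k" unfolding w_def carrier_vec_def using A by simp
  have "\<mu> * (v \<bullet> v) = v \<bullet> ((A * transpose_mat A) *\<^sub>v v)"
    using ev v by simp
  also have "\<dots> = v \<bullet> (A *\<^sub>v w)"
    using A v by (simp add: w_def)
  also have "\<dots> = w \<bullet> w"
    using transpose_vec_mult_scalar[OF A w v(1)] by (simp add: w_def)
  finally have eq: "\<mu> * (v \<bullet> v) = w \<bullet> w" .
  have "v \<bullet> v > 0"
  proof -
    obtain i where i: "i < n" "v $ i \<noteq> 0"
      using v by (metis eq_vecI carrier_vecD index_zero_vec)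
    have "0 < (\<Sum>j\<in>{0..<n}. v $ j * v $ j)"
      by (rule sum_pos2[of _ i]) (use i in \<open>auto simp: zero_less_mult_iff linorder_neq_iff\<close>)
    then show ?thesis using v unfolding scalar_prod_def by simp
  qed
  moreover have "w \<bullet> w \<ge> 0" unfolding scalar_prod_def by (intro sum_nonneg) simp
  ultimately show ?thesis using eq by (metis zero_le_mult_iff not_le)
qed

lemma char_poly_four_block_zero_diag:
  fixes B C :: "'a :: field_char_0 mat"
  assumes B: "B \<in> carrier_mat n n" and C: "C \<in> carrier_mat n n"
  shows "char_poly (four_block_mat (0\<^sub>m n n) B C (0\<^sub>m n n)) = char_poly (B * C) \<circ>\<^sub>p [:0, 0, 1:]"
proof (rule poly_ext)
  fix x :: 'a
  have I: "x \<cdot>\<^sub>m 1\<^sub>m n \<in> carrier_mat n n" by simp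
  have "x \<cdot>\<^sub>m 1\<^sub>m (n + n) - four_block_mat (0\<^sub>m n n) B C (0\<^sub>m n n)
      = four_block_mat (x \<cdot>\<^sub>m 1\<^sub>m n) (- B) (- C) (x \<cdot>\<^sub>m 1\<^sub>m n)"
    using B C by (intro eq_matI) auto
  moreover have "det (four_block_mat (x \<cdot>\<^sub>m 1\<^sub>m n) (- B) (- C) (x \<cdot>\<^sub>m 1\<^sub>m n))
      = det ((x * x) \<cdot>\<^sub>m 1\<^sub>m n - B * C)"
  proof -
    have "det (four_block_mat (x \<cdot>\<^sub>m 1\<^sub>m n) (- B) (- C) (x \<cdot>\<^sub>m 1\<^sub>m n))
        = det (x \<cdot>\<^sub>m 1\<^sub>m n * (x \<cdot>\<^sub>m 1\<^sub>m n) - (- B) * (- C))"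
      using B C by (intro det_four_block_mat[OF I _ _ I]) (auto simp: mult_smult_distrib[of _ n n _ n])
    also have "x \<cdot>\<^sub>m 1\<^sub>m n * (x \<cdot>\<^sub>m 1\<^sub>m n) - (- B) * (- C) = (x * x) \<cdot>\<^sub>m 1\<^sub>m n - B * C"
      using B C by (intro eq_matI) (auto simp: mult_smult_distrib[of _ n n _ n])
    finally show ?thesis .
  qed
  ultimately show "poly (char_poly (four_block_mat (0\<^sub>m n n) B C (0\<^sub>m n n))) x
      = poly (char_poly (B * C) \<circ>\<^sub>p [:0, 0, 1:]) x"
    using B C by (simp add: poly_char_poly[of _ "n + n"] poly_char_poly[of _ n] poly_pcompose)
qed

lemma pcompose_square_linear:
  "0 \<le> \<mu> \<Longrightarrow> [:- \<mu>, 1:] \<circ>\<^sub>p [:0, 0, 1:] = [:- sqrt \<mu>, 1:] * [:sqrt \<mu>, 1 :: real:]"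
  by (simp add: pcompose_pCons)

lemma mult_ones_vec_index:
  "i < dim_row A \<Longrightarrow> (A *\<^sub>v ones_vec (dim_col A)) $ i = (\<Sum>j\<in>{0..<dim_col A}. A $$ (i, j))"
  for A :: "'a :: semiring_1 mat"
  by (simp add: scalar_prod_def)

definition inc_mat :: "nat \<Rightarrow> (nat \<Rightarrow> nat \<Rightarrow> bool) \<Rightarrow> real mat" where
  "inc_mat m N = mat m m (\<lambda>(b, w). of_bool (N b w))"

definition c1_graph_degree :: "nat \<Rightarrow> nat \<Rightarrow> nat \<Rightarrow> nat \<Rightarrow> real" where
  "c1_graph_degree m d c1 c2 = (real d * (real d - 1) - (real m - 1) * real c2) / (real c1 - real c2)"

lemma inc_mat_carrier [simp]: "inc_mat m N \<in> carrier_mat m m"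
  by (simp add: inc_mat_def)

lemma X_mat_four_block:
  "X_mat m N = four_block_mat (0\<^sub>m m m) (inc_mat m N) (transpose_mat (inc_mat m N)) (0\<^sub>m m m)"
  by (rule eq_matI) (auto simp: X_mat_def X_adj_def inc_mat_def)

lemma inc_mat_gram_index:
  assumes "u < m" "v < m"
  shows "(inc_mat m N * transpose_mat (inc_mat m N)) $$ (u, v) = real (common_black m N u v)"
proof -
  have "{0..<m} \<inter> {w. N u w \<and> N v w} = {w. w < m \<and> N u w \<and> N v w}" by auto
  then show ?thesis
    using assms by (simp add: inc_mat_def common_black_def scalar_prod_def of_bool_conj[symmetric])
qed

lemma inc_mat_mult_ones_vec:
  assumes "\<forall>b<m. black_deg m N b = d"
  shows "inc_mat m N *\<^sub>v ones_vec m = real d \<cdot>\<^sub>v ones_vec m"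
proof (rule eq_vecI)
  fix b assume b: "b < dim_vec (real d \<cdot>\<^sub>v ones_vec m)"
  have "{0..<m} \<inter> {w. N b w} = {w. w < m \<and> N b w}" by auto
  then show "(inc_mat m N *\<^sub>v ones_vec m) $ b = (real d \<cdot>\<^sub>v ones_vec m) $ b"
    using b assms by (simp add: inc_mat_def scalar_prod_def black_deg_def)
qed (simp add: inc_mat_def)

lemma transpose_inc_mat_mult_ones_vec:
  assumes "\<forall>w<m. white_deg m N w = d"
  shows "transpose_mat (inc_mat m N) *\<^sub>v ones_vec m = real d \<cdot>\<^sub>v ones_vec m"
proof (rule eq_vecI)
  fix w assume w: "w < dim_vec (real d \<cdot>\<^sub>v ones_vec m)"
  have "{0..<m} \<inter> {b. N b w} = {b. b < m \<and> N b w}" by auto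
  then show "(transpose_mat (inc_mat m N) *\<^sub>v ones_vec m) $ w = (real d \<cdot>\<^sub>v ones_vec m) $ w"
    using w assms by (simp add: inc_mat_def scalar_prod_def white_deg_def)
qed (simp add: inc_mat_def)

lemma Y_mat_row_sum:
  assumes "u < m"
  shows "(\<Sum>v\<in>{0..<m}. Y_mat m c1 N $$ (u, v)) = real (Y_deg m c1 N u)"
proof -
  have "{0..<m} \<inter> {v. Y_adj m c1 N u v} = {v. Y_adj m c1 N u v}" by (auto simp: Y_adj_def)
  then show ?thesis
    using assms by (simp add: Y_mat_def Y_deg_def of_bool_def[symmetric])
qed

context
  fixes m d c1 c2 :: nat and N :: "nat \<Rightarrow> nat \<Rightarrow> bool"
  assumes pdg: "partial_design_graph m d c1 c2 N"
begin

lemma pdg_c1_ne_c2: "c1 \<noteq> c2"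
  using pdg by (simp add: partial_design_graph_def)

lemma pdg_black_deg: "\<forall>b<m. black_deg m N b = d"
  using pdg by (simp add: partial_design_graph_def)

lemma pdg_white_deg: "\<forall>w<m. white_deg m N w = d"
  using pdg by (simp add: partial_design_graph_def)

lemma pdg_common_black_cases:
  assumes "u < m" "v < m" "u \<noteq> v"
  shows "common_black m N u v = c1 \<or> common_black m N u v = c2"
  using pdg assms unfolding partial_design_graph_def by blast

lemma pdg_pos: "0 < m"
proof -
  have "c1 \<in> {common_black m N u v | u v. u < m \<and> v < m \<and> u \<noteq> v}
      \<union> {common_white m N u v | u v. u < m \<and> v < m \<and> u \<noteq> v}"
    using pdg by (simp add: partial_design_graph_def)
  then show ?thesis by auto
qed

lemma pdg_gram:
  "inc_mat m N * transpose_mat (inc_mat m N)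
    = (real d - real c2) \<cdot>\<^sub>m 1\<^sub>m m + (real c1 - real c2) \<cdot>\<^sub>m Y_mat m c1 N + real c2 \<cdot>\<^sub>m ones_mat m"
  (is "?G = ?R")
proof (rule eq_matI)
  fix u v assume "u < dim_row ?R" "v < dim_col ?R"
  then have uv: "u < m" "v < m" by (auto simp: Y_mat_def)
  have "common_black m N u u = d"
    using pdg_black_deg uv by (simp add: common_black_def black_deg_def)
  then show "?G $$ (u, v) = ?R $$ (u, v)"
    using uv pdg_common_black_cases[of u v]
    by (auto simp: inc_mat_gram_index Y_mat_def Y_adj_def)
qed (auto simp: Y_mat_def inc_mat_def)

lemma pdg_c1_graph_regular:
  assumes u: "u < m"
  shows "real (Y_deg m c1 N u) = c1_graph_degree m d c1 c2"
proof -
  let ?G = "inc_mat m N * transpose_mat (inc_mat m N)"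
  have G: "?G \<in> carrier_mat m m" by (rule mult_carrier_mat) (auto simp: inc_mat_def)
  \<comment> \<open>count the walks of length two starting at \<open>u\<close> in two ways\<close>
  have "?G *\<^sub>v ones_vec m = inc_mat m N *\<^sub>v (transpose_mat (inc_mat m N) *\<^sub>v ones_vec m)"
    by (rule assoc_mult_mat_vec) (auto simp: inc_mat_def)
  also have "\<dots> = inc_mat m N *\<^sub>v (real d \<cdot>\<^sub>v ones_vec m)"
    by (simp add: transpose_inc_mat_mult_ones_vec[OF pdg_white_deg])
  also have "\<dots> = (real d * real d) \<cdot>\<^sub>v ones_vec m"
    by (simp add: mult_mat_vec[of _ m m] inc_mat_mult_ones_vec[OF pdg_black_deg] smult_smult_assoc)
  finally have G_ones: "?G *\<^sub>v ones_vec m = (real d * real d) \<cdot>\<^sub>v ones_vec m" .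
  have dims: "dim_row ?G = m" "dim_col ?G = m" using G by auto
  have "real d * real d = (?G *\<^sub>v ones_vec m) $ u"
    using u by (simp add: G_ones)
  also have "\<dots> = (\<Sum>v\<in>{0..<m}. ?G $$ (u, v))"
    using mult_ones_vec_index[of u ?G] u unfolding dims by blast
  also have "\<dots> = (\<Sum>v\<in>{0..<m}. (if u = v then real d - real c2 else 0)
      + (real c1 - real c2) * Y_mat m c1 N $$ (u, v) + real c2)"
    using u by (intro sum.cong) (auto simp: pdg_gram Y_mat_def)
  also have "\<dots> = (real d - real c2) + (real c1 - real c2) * real (Y_deg m c1 N u) + real c2 * real m"
    using u by (simp add: sum.distrib sum_distrib_left[symmetric] Y_mat_row_sum)
  finally show ?thesis
    using pdg_c1_ne_c2 by (simp add: c1_graph_degree_def field_simps)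
qed

lemma pdg_affine_c1_mat_mult_ones_vec:
  "(a \<cdot>\<^sub>m 1\<^sub>m m + b \<cdot>\<^sub>m Y_mat m c1 N) *\<^sub>v ones_vec m = (a + b * c1_graph_degree m d c1 c2) \<cdot>\<^sub>v ones_vec m"
  (is "?P *\<^sub>v _ = _")
proof (rule eq_vecI)
  fix u assume "u < dim_vec ((a + b * c1_graph_degree m d c1 c2) \<cdot>\<^sub>v ones_vec m)"
  then have u: "u < m" by simp
  have "(?P *\<^sub>v ones_vec m) $ u = (\<Sum>v\<in>{0..<m}. (if u = v then a else 0) + b * Y_mat m c1 N $$ (u, v))"
    using mult_ones_vec_index[of u ?P] u by (auto simp: Y_mat_def intro!: sum.cong)
  also have "\<dots> = a + b * c1_graph_degree m d c1 c2"
    using u by (simp add: sum.distrib sum_distrib_left[symmetric] Y_mat_row_sum pdg_c1_graph_regular)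
  finally show "(?P *\<^sub>v ones_vec m) $ u = ((a + b * c1_graph_degree m d c1 c2) \<cdot>\<^sub>v ones_vec m) $ u"
    using u by simp
qed (simp add: Y_mat_def)

lemma pdg_char_poly_gram:
  fixes \<alpha> :: "real list"
  assumes a0: "\<alpha> ! 0 = c1_graph_degree m d c1 c2"
    and cp: "char_poly (Y_mat m c1 N) = (\<Prod>k<m. [:- (\<alpha> ! k), 1:])"
  shows "char_poly (inc_mat m N * transpose_mat (inc_mat m N)) = [:- (real d * real d), 1:] *
    (\<Prod>k\<in>{1..<m}. [:- ((real d - real c2) + (real c1 - real c2) * \<alpha> ! k), 1:])"
proof -
  define \<mu> where "\<mu> k = (real d - real c2) + (real c1 - real c2) * \<alpha> ! k" for k
  define P where "P = (real d - real c2) \<cdot>\<^sub>m 1\<^sub>m m + (real c1 - real c2) \<cdot>\<^sub>m Y_mat m c1 N"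
  have P: "P \<in> carrier_mat m m" by (simp add: P_def Y_mat_def)
  have "char_poly P = (\<Prod>k<m. [:- \<mu> k, 1:])"
    unfolding P_def \<mu>_def
    by (rule char_poly_affine[where \<alpha> = "\<lambda>k. \<alpha> ! k"]) (use cp pdg_c1_ne_c2 in \<open>auto simp: Y_mat_def\<close>)
  also have "\<dots> = [:- \<mu> 0, 1:] * (\<Prod>k\<in>{1..<m}. [:- \<mu> k, 1:])"
  proof -
    have "{..<m} = insert 0 {1..<m}" using pdg_pos by auto
    then show ?thesis by simp
  qed
  finally have cpP: "char_poly P = [:- \<mu> 0, 1:] * (\<Prod>k\<in>{1..<m}. [:- \<mu> k, 1:])" .
  have "P *\<^sub>v ones_vec m = \<mu> 0 \<cdot>\<^sub>v ones_vec m"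
    unfolding P_def \<mu>_def a0 by (rule pdg_affine_c1_mat_mult_ones_vec)
  from char_poly_add_smult_ones_mat[OF P this, of "real c2"]
  have "[:- \<mu> 0, 1:] * char_poly (inc_mat m N * transpose_mat (inc_mat m N))
      = [:- (\<mu> 0 + real c2 * real m), 1:] * char_poly P"
    by (simp add: pdg_gram P_def)
  also have "\<mu> 0 + real c2 * real m = real d * real d"
    using pdg_c1_ne_c2 by (simp add: \<mu>_def a0 c1_graph_degree_def field_simps)
  finally have "[:- \<mu> 0, 1:] * char_poly (inc_mat m N * transpose_mat (inc_mat m N))
      = [:- \<mu> 0, 1:] * ([:- (real d * real d), 1:] * (\<Prod>k\<in>{1..<m}. [:- \<mu> k, 1:]))"
    unfolding cpP by (simp only: mult.left_commute)
  moreover have "[:- \<mu> 0, 1:] \<noteq> 0" by simp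
  ultimately have "char_poly (inc_mat m N * transpose_mat (inc_mat m N))
      = [:- (real d * real d), 1:] * (\<Prod>k\<in>{1..<m}. [:- \<mu> k, 1:])"
    using mult_left_cancel by blast
  then show ?thesis
    by (simp only: \<mu>_def)
qed

end

theorem mainTheorem17:
  fixes m d c1 c2 :: nat and N :: "nat \<Rightarrow> nat \<Rightarrow> bool"
  assumes X: "partial_design_graph m d c1 c2 N"
  defines "d' \<equiv> (real d * (real d - 1) - (real m - 1) * real c2) / (real c1 - real c2)"
  shows "(\<forall>u<m. real (Y_deg m c1 N u) = d') \<and>
    (\<forall>\<alpha> :: real list. length \<alpha> = m \<longrightarrow> \<alpha> ! 0 = d' \<longrightarrow>
       char_poly (Y_mat m c1 N) = (\<Prod>k<m. [:- (\<alpha> ! k), 1:]) \<longrightarrow>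
       char_poly (X_mat m N) =
         [:- real d, 1:] * [:real d, 1:] *
         (\<Prod>k\<in>{1..<m}.
            [:- sqrt ((real d - real c2) + (real c1 - real c2) * \<alpha> ! k), 1:] *
            [:sqrt ((real d - real c2) + (real c1 - real c2) * \<alpha> ! k), 1:]))"
proof (intro conjI allI impI)
  have d'_eq: "d' = c1_graph_degree m d c1 c2" by (simp add: d'_def c1_graph_degree_def)
  show "real (Y_deg m c1 N u) = d'" if "u < m" for u
    using pdg_c1_graph_regular[OF X that] d'_eq by simp
  fix \<alpha> :: "real list"
  assume "\<alpha> ! 0 = d'" and cp: "char_poly (Y_mat m c1 N) = (\<Prod>k<m. [:- (\<alpha> ! k), 1:])"
  define \<mu> where "\<mu> k = (real d - real c2) + (real c1 - real c2) * \<alpha> ! k" for k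
  let ?M = "inc_mat m N"
  have gram: "char_poly (?M * transpose_mat ?M) = [:- (real d * real d), 1:] * (\<Prod>k\<in>{1..<m}. [:- \<mu> k, 1:])"
    unfolding \<mu>_def using pdg_char_poly_gram[OF X] \<open>\<alpha> ! 0 = d'\<close> cp d'_eq by simp
  have "0 \<le> \<mu> k" if "k \<in> {1..<m}" for k
    by (rule char_poly_gram_root_nonneg[of ?M m m]) (use that in \<open>auto simp: gram poly_prod\<close>)
  then have roots: "(\<Prod>k\<in>{1..<m}. [:- \<mu> k, 1:] \<circ>\<^sub>p [:0, 0, 1:])
      = (\<Prod>k\<in>{1..<m}. [:- sqrt (\<mu> k), 1:] * [:sqrt (\<mu> k), 1:])"
    by (intro prod.cong refl pcompose_square_linear) blast
  have "char_poly (X_mat m N) = char_poly (?M * transpose_mat ?M) \<circ>\<^sub>p [:0, 0, 1:]"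
    unfolding X_mat_four_block by (rule char_poly_four_block_zero_diag) auto
  also have "\<dots> = ([:- (real d * real d), 1:] \<circ>\<^sub>p [:0, 0, 1:]) *
      (\<Prod>k\<in>{1..<m}. [:- \<mu> k, 1:] \<circ>\<^sub>p [:0, 0, 1:])"
    by (simp only: gram pcompose_mult pcompose_prod)
  also have "[:- (real d * real d), 1:] \<circ>\<^sub>p [:0, 0, 1:] = [:- real d, 1:] * [:real d, 1:]"
    using pcompose_square_linear[of "real d * real d"] by simp
  finally show "char_poly (X_mat m N) = [:- real d, 1:] * [:real d, 1:] *
      (\<Prod>k\<in>{1..<m}. [:- sqrt (\<mu> k), 1:] * [:sqrt (\<mu> k), 1:])"
    unfolding roots .
qed

end
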